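(* Let $\Gamma\subset\{d_L<+\infty\}$ be a $\sigma$-compact $d_L$-cyclically monotone subset of $X\times X$, and let $\Gamma'$, $G$, $R$ be defined from $\Gamma$ as in the context. Then: (1) $G$ is $d_L$-cyclically monotone; (2) $\Gamma'\subset G\subset\{(x,y):d_L(x,y)<+\infty\}$; (3) $G$ and $R$ are analytic subsets of $X\times X$.
   Context: $(X,d)$ is a Polish space and $d_L:X\times X\to[0,+\infty]$ is a distance (possibly taking the value $+\infty$) which is Borel on $(X\times X,d\times d)$. A set $\Gamma\subset X\times X$ is $d_L$-cyclically monotone if for all $(x_0,y_0),\dots,(x_n,y_n)\in\Gamma$, $\sum_{i=0}^n d_L(x_i,y_i)\le\sum_{i=0}^n d_L(x_{i+1},y_i)$ with $x_{n+1}=x_0$. $\Gamma'$ is the set of $(x,y)$ such that there exist $I\ge0$ and $(w_i,z_i)\in\Gamma$, $i=0,\dots,I$, with $w_0=x$, $z_I=y$, $w_{I+1}:=w_0$ and $\sum_{i=0}^I(d_L(w_{i+1},z_i)-d_L(w_i,z_i))=0$. The set of oriented transport rays is $G:=\{(x,y):\exists(w,z)\in\Gamma',\ d_L(w,x)+d_L(x,y)+d_L(y,z)=d_L(w,z)\}$, $G^{-1}:=\{(x,y):(y,x)\in G\}$, and $R:=G\cup G^{-1}$. Analytic sets are projections of Borel sets of products of Polish spaces. *)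

theory Defs
  imports "HOL-Analysis.Analysis"
begin

definition ext_distance :: "('a \<Rightarrow> 'a \<Rightarrow> ereal) \<Rightarrow> bool" where
  "ext_distance dL \<longleftrightarrow>
     (\<forall>x y. 0 \<le> dL x y) \<and>
     (\<forall>x y. dL x y = 0 \<longleftrightarrow> x = y) \<and>
     (\<forall>x y. dL x y = dL y x) \<and>
     (\<forall>x y z. dL x z \<le> dL x y + dL y z)"

definition sigma_compact :: "'a::topological_space set \<Rightarrow> bool" where
  "sigma_compact S \<longleftrightarrow> (\<exists>K :: nat \<Rightarrow> 'a set. (\<forall>n. compact (K n)) \<and> S = (\<Union>n. K n))"

text \<open>d_L-cyclical monotonicity; indices 0..n, with x_{n+1} = x_0.\<close>
definition cyclically_monotone :: "('a \<Rightarrow> 'a \<Rightarrow> ereal) \<Rightarrow> ('a \<times> 'a) set \<Rightarrow> bool" where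
  "cyclically_monotone dL \<Gamma> \<longleftrightarrow>
     (\<forall>(n::nat) (x::nat \<Rightarrow> 'a) (y::nat \<Rightarrow> 'a).
        (\<forall>i\<le>n. (x i, y i) \<in> \<Gamma>) \<longrightarrow>
        (\<Sum>i\<le>n. dL (x i) (y i)) \<le> (\<Sum>i\<le>n. dL (x (if i = n then 0 else Suc i)) (y i)))"

definition Gamma' :: "('a \<Rightarrow> 'a \<Rightarrow> ereal) \<Rightarrow> ('a \<times> 'a) set \<Rightarrow> ('a \<times> 'a) set" where
  "Gamma' dL \<Gamma> = {(x, y). \<exists>(I::nat) (w::nat \<Rightarrow> 'a) (z::nat \<Rightarrow> 'a).
      (\<forall>i\<le>I. (w i, z i) \<in> \<Gamma>) \<and> w 0 = x \<and> z I = y \<and>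
      (\<Sum>i\<le>I. dL (w (if i = I then 0 else Suc i)) (z i) - dL (w i) (z i)) = 0}"

definition transport_G :: "('a \<Rightarrow> 'a \<Rightarrow> ereal) \<Rightarrow> ('a \<times> 'a) set \<Rightarrow> ('a \<times> 'a) set" where
  "transport_G dL \<Gamma> = {(x, y). \<exists>(w, z) \<in> Gamma' dL \<Gamma>. dL w x + dL x y + dL y z = dL w z}"

definition transport_R :: "('a \<Rightarrow> 'a \<Rightarrow> ereal) \<Rightarrow> ('a \<times> 'a) set \<Rightarrow> ('a \<times> 'a) set" where
  "transport_R dL \<Gamma> = transport_G dL \<Gamma> \<union> (transport_G dL \<Gamma>)\<inverse>"

text \<open>Analytic set: projection of a Borel subset of the product with a Polish space.
  The auxiliary Polish space is fixed to be the reals.\<close>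
definition analytic_set :: "'a::topological_space set \<Rightarrow> bool" where
  "analytic_set A \<longleftrightarrow> (\<exists>B \<in> sets (borel :: ('a \<times> real) measure). A = fst ` B)"

end

theory Submission
  imports Defs
begin

text \<open>
  Cyclical monotonicity is reformulated for finite lists of pairs, comparing
  the diagonal cost with the cost of the cyclic shift.  Each pair of \<open>\<Gamma>'\<close> is the pair of
  endpoints of a list in \<open>\<Gamma>\<close> on which this comparison is an equality of finite costs;
  concatenating such lists and cancelling shows that \<open>\<Gamma>'\<close> is cyclically monotone with finite
  costs.  Then a general lemma shows that the rays through any such set are again
  cyclically monotone and of finite cost, by the triangle inequality and cancellation.

  Descriptive half.  \<open>G\<close> is the projection of the Borel set of pairs together with a
  witnessing chain, a subset of \<open>(X \<times> X) \<times> (X \<times> X)\<^sup>\<nat>\<close>.  Since every Polish space is the image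
  of the reals under a Borel map (constructed by binary coding of sequences of indices into
  a dense set), such projections are analytic; analytic sets are closed under unions and
  converses, which gives \<open>R\<close>.
\<close>

lemma ext_distance_nonneg: "ext_distance d \<Longrightarrow> 0 \<le> d x y"
  and ext_distance_refl: "ext_distance d \<Longrightarrow> d x x = 0"
  and ext_distance_triangle: "ext_distance d \<Longrightarrow> d x z \<le> d x y + d y z"
  unfolding ext_distance_def by blast+

lemma ext_distance_triangle3:
  assumes "ext_distance d"
  shows "d w z \<le> d w x + d x y + d y z"
proof -
  have "d w z \<le> d w y + d y z" by (rule ext_distance_triangle[OF assms])
  also have "d w y \<le> d w x + d x y" by (rule ext_distance_triangle[OF assms])
  finally show ?thesis by (simp add: add_right_mono)
qed

lemma ereal_add_le_cancel_left:
  fixes a b c :: ereal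
  assumes "c + a \<le> c + b" "0 \<le> c" "c < \<infinity>"
  shows "a \<le> b"
  using assms ereal_add_le_add_iff[of c a b] by auto

lemma sum_ereal_finite:
  fixes f :: "'i \<Rightarrow> ereal"
  shows "(\<And>i. i \<in> A \<Longrightarrow> f i < \<infinity>) \<Longrightarrow> sum f A < \<infinity>"
  by (simp add: less_top[symmetric] sum_Pinfty)

text \<open>If all \<open>b i\<close> are finite, a vanishing sum of differences \<open>a i - b i\<close> forces
  \<open>\<Sum> a = \<Sum> b\<close>; this translates the defining condition of \<open>\<Gamma>'\<close> into an equality of costs.\<close>
lemma sum_eq_if_sum_diff_eq_0:
  fixes a b :: "'i \<Rightarrow> ereal"
  assumes fin: "\<And>i. i \<in> A \<Longrightarrow> \<bar>b i\<bar> \<noteq> \<infinity>" and zero: "(\<Sum>i\<in>A. a i - b i) = 0"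
  shows "sum a A = sum b A"
proof -
  have "sum a A = (\<Sum>i\<in>A. (a i - b i) + b i)"
    using fin by (intro sum.cong refl) (metis ereal_diff_add_assoc2 ereal_diff_add_inverse add.commute)
  also have "\<dots> = sum b A" by (simp add: sum.distrib zero)
  finally show ?thesis .
qed

lemma sum_cyclic_shift:
  fixes f :: "nat \<Rightarrow> 'b::comm_monoid_add"
  shows "(\<Sum>i\<le>n. f (if i = n then 0 else Suc i)) = (\<Sum>i\<le>n. f i)"
proof (cases n)
  case (Suc m)
  have "(\<Sum>i\<le>n. f (if i = n then 0 else Suc i)) = (\<Sum>i\<le>m. f (Suc i)) + f 0"
    unfolding Suc by (simp add: sum.atMost_Suc)
  also have "\<dots> = (\<Sum>i\<le>n. f i)" unfolding Suc by (simp only: sum.atMost_Suc_shift add.commute)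
  finally show ?thesis .
qed simp

text \<open>Costs of a finite list \<open>L = [(x\<^sub>0,y\<^sub>0), \<dots>, (x\<^sub>n,y\<^sub>n)]\<close> of pairs:
  \<open>diag_cost\<close> is \<open>\<Sum> d x\<^sub>i y\<^sub>i\<close>, \<open>chain_cost\<close> is \<open>\<Sum>\<^sub>i\<^sub><\<^sub>n d x\<^sub>i\<^sub>+\<^sub>1 y\<^sub>i\<close>, and
  \<open>cycle_cost\<close> closes the chain with \<open>d x\<^sub>0 y\<^sub>n\<close>, i.e. it is the cost of the cyclic shift
  occurring in the definition of cyclical monotonicity.\<close>
fun diag_cost :: "('a \<Rightarrow> 'a \<Rightarrow> ereal) \<Rightarrow> ('a \<times> 'a) list \<Rightarrow> ereal" where
  "diag_cost d [] = 0"
| "diag_cost d (p # ps) = d (fst p) (snd p) + diag_cost d ps"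

fun chain_cost :: "('a \<Rightarrow> 'a \<Rightarrow> ereal) \<Rightarrow> ('a \<times> 'a) list \<Rightarrow> ereal" where
  "chain_cost d [] = 0"
| "chain_cost d [p] = 0"
| "chain_cost d (p # q # ps) = d (fst q) (snd p) + chain_cost d (q # ps)"

definition cycle_cost :: "('a \<Rightarrow> 'a \<Rightarrow> ereal) \<Rightarrow> ('a \<times> 'a) list \<Rightarrow> ereal" where
  "cycle_cost d L = chain_cost d L + d (fst (hd L)) (snd (last L))"

definition endpoints :: "('a \<times> 'a) list \<Rightarrow> 'a \<times> 'a" where
  "endpoints L = (fst (hd L), snd (last L))"

lemma diag_cost_conv_sum: "diag_cost d L = (\<Sum>i<length L. d (fst (L ! i)) (snd (L ! i)))"
  by (induction L) (simp_all add: sum.lessThan_Suc_shift del: sum.lessThan_Suc)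

lemma chain_cost_conv_sum: "chain_cost d L = (\<Sum>i<length L - 1. d (fst (L ! Suc i)) (snd (L ! i)))"
  by (induction d L rule: chain_cost.induct)
    (simp_all add: sum.lessThan_Suc_shift del: sum.lessThan_Suc)

lemma chain_cost_nonneg: "ext_distance d \<Longrightarrow> 0 \<le> chain_cost d L"
  by (simp add: chain_cost_conv_sum sum_nonneg ext_distance_nonneg)

lemma diag_cost_finite: "set L \<subseteq> {(x, y). d x y < \<infinity>} \<Longrightarrow> diag_cost d L < \<infinity>"
  by (induction L) auto

lemma diag_cost_upt:
  "diag_cost d (map (\<lambda>i. (x i, y i)) [0..<Suc n]) = (\<Sum>i\<le>n. d (x i) (y i))"
  by (simp add: diag_cost_conv_sum lessThan_Suc_atMost del: upt_Suc)

lemma cycle_cost_upt: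
  "cycle_cost d (map (\<lambda>i. (x i, y i)) [0..<Suc n]) = (\<Sum>i\<le>n. d (x (if i = n then 0 else Suc i)) (y i))"
proof -
  have "chain_cost d (map (\<lambda>i. (x i, y i)) [0..<Suc n]) = (\<Sum>i<n. d (x (Suc i)) (y i))"
    by (simp add: chain_cost_conv_sum del: upt_Suc)
  moreover have "(\<Sum>i\<le>n. d (x (if i = n then 0 else Suc i)) (y i)) = (\<Sum>i<n. d (x (Suc i)) (y i)) + d (x 0) (y n)"
    by (simp add: lessThan_Suc_atMost[symmetric] sum.lessThan_Suc)
  ultimately show ?thesis by (simp add: cycle_cost_def hd_map last_map del: upt_Suc)
qed

lemma cyclically_monotone_iff_lists:
  "cyclically_monotone d \<Gamma> \<longleftrightarrow> (\<forall>L. L \<noteq> [] \<longrightarrow> set L \<subseteq> \<Gamma> \<longrightarrow> diag_cost d L \<le> cycle_cost d L)"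
proof
  assume cm: "cyclically_monotone d \<Gamma>"
  show "\<forall>L. L \<noteq> [] \<longrightarrow> set L \<subseteq> \<Gamma> \<longrightarrow> diag_cost d L \<le> cycle_cost d L"
  proof (intro allI impI)
    fix L :: "('a \<times> 'a) list" assume "L \<noteq> []" "set L \<subseteq> \<Gamma>"
    define n where "n = length L - 1"
    have L: "L = map (\<lambda>i. (fst (L ! i), snd (L ! i))) [0..<Suc n]"
      using \<open>L \<noteq> []\<close> map_nth[of L] by (simp add: n_def del: upt_Suc)
    have "\<forall>i\<le>n. (fst (L ! i), snd (L ! i)) \<in> \<Gamma>"
    proof (intro allI impI)
      fix i assume "i \<le> n"
      moreover have "0 < length L" using \<open>L \<noteq> []\<close> by simp
      ultimately have "i < length L" unfolding n_def by arith
      then show "(fst (L ! i), snd (L ! i)) \<in> \<Gamma>" using \<open>set L \<subseteq> \<Gamma>\<close> nth_mem by auto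
    qed
    with cm[unfolded cyclically_monotone_def, rule_format, of n "\<lambda>i. fst (L ! i)" "\<lambda>i. snd (L ! i)"]
    have "diag_cost d (map (\<lambda>i. (fst (L ! i), snd (L ! i))) [0..<Suc n])
        \<le> cycle_cost d (map (\<lambda>i. (fst (L ! i), snd (L ! i))) [0..<Suc n])"
      unfolding diag_cost_upt cycle_cost_upt by blast
    then show "diag_cost d L \<le> cycle_cost d L" by (simp only: L[symmetric])
  qed
next
  assume lists: "\<forall>L. L \<noteq> [] \<longrightarrow> set L \<subseteq> \<Gamma> \<longrightarrow> diag_cost d L \<le> cycle_cost d L"
  show "cyclically_monotone d \<Gamma>"
    unfolding cyclically_monotone_def
  proof (intro allI impI)
    fix n and x y :: "nat \<Rightarrow> 'a" assume "\<forall>i\<le>n. (x i, y i) \<in> \<Gamma>"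
    then have "set (map (\<lambda>i. (x i, y i)) [0..<Suc n]) \<subseteq> \<Gamma>" by (auto simp: less_Suc_eq_le)
    with lists[rule_format, of "map (\<lambda>i. (x i, y i)) [0..<Suc n]"]
    show "(\<Sum>i\<le>n. d (x i) (y i)) \<le> (\<Sum>i\<le>n. d (x (if i = n then 0 else Suc i)) (y i))"
      by (simp add: diag_cost_upt cycle_cost_upt del: upt_Suc)
  qed
qed

lemma diag_cost_append: "diag_cost d (L1 @ L2) = diag_cost d L1 + diag_cost d L2"
  by (induction L1) (simp_all add: add.assoc)

lemma chain_cost_append:
  "L1 \<noteq> [] \<Longrightarrow> L2 \<noteq> [] \<Longrightarrow>
   chain_cost d (L1 @ L2) = chain_cost d L1 + d (fst (hd L2)) (snd (last L1)) + chain_cost d L2"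
  by (induction d L1 rule: chain_cost.induct) (auto simp: neq_Nil_conv add.assoc)

lemma chain_cost_concat:
  assumes "\<forall>L\<in>set Ls. L \<noteq> []"
  shows "chain_cost d (concat Ls) = sum_list (map (chain_cost d) Ls) + chain_cost d (map endpoints Ls)"
  using assms
proof (induction Ls rule: induct_list012)
  case (3 L1 L2 Ls)
  have "concat (L2 # Ls) \<noteq> []" "hd (concat (L2 # Ls)) = hd L2"
    using "3.prems" by auto
  then show ?case
    using "3.IH"(2) "3.prems" chain_cost_append[of L1 "concat (L2 # Ls)" d]
    by (simp add: endpoints_def add_ac)
qed simp_all

lemma diag_cost_concat_tight:
  assumes "\<forall>L\<in>set Ls. cycle_cost d L = diag_cost d L"
  shows "diag_cost d (concat Ls) = sum_list (map (chain_cost d) Ls) + diag_cost d (map endpoints Ls)"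
  using assms
proof (induction Ls)
  case (Cons L Ls)
  then have "diag_cost d L = chain_cost d L + d (fst (hd L)) (snd (last L))"
    by (simp add: cycle_cost_def)
  with Cons show ?case by (simp add: diag_cost_append endpoints_def add_ac)
qed simp

lemma cycle_cost_concat:
  assumes "Ls \<noteq> []" "\<forall>L\<in>set Ls. L \<noteq> []"
  shows "cycle_cost d (concat Ls) = sum_list (map (chain_cost d) Ls) + cycle_cost d (map endpoints Ls)"
proof -
  have "hd (concat Ls) = hd (hd Ls)" using assms by (simp add: hd_concat)
  moreover have "last (concat Ls) = last (last Ls)"
    using assms by (induction Ls) (auto simp: concat_eq_Nil_conv)
  ultimately show ?thesis
    using assms by (simp add: cycle_cost_def chain_cost_concat endpoints_def hd_map last_map add_ac)
qed

lemma Gamma'_chain: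
  assumes ed: "ext_distance d" and fin: "\<Gamma> \<subseteq> {(x, y). d x y < \<infinity>}"
    and mem: "(W, Z) \<in> Gamma' d \<Gamma>"
  obtains L where "L \<noteq> []" "set L \<subseteq> \<Gamma>" "endpoints L = (W, Z)"
    "cycle_cost d L = diag_cost d L" "diag_cost d L < \<infinity>"
proof -
  obtain I w z where chain: "\<forall>i\<le>I. (w i, z i) \<in> \<Gamma>" and ends: "w 0 = W" "z I = Z"
    and zero: "(\<Sum>i\<le>I. d (w (if i = I then 0 else Suc i)) (z i) - d (w i) (z i)) = 0"
    using mem unfolding Gamma'_def by blast
  define L where "L = map (\<lambda>i. (w i, z i)) [0..<Suc I]"
  have sub: "set L \<subseteq> \<Gamma>" using chain by (auto simp: L_def less_Suc_eq_le)
  have "\<bar>d (w i) (z i)\<bar> \<noteq> \<infinity>" if "i \<in> {..I}" for i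
    using that chain fin ext_distance_nonneg[OF ed, of "w i" "z i"] by auto
  from sum_eq_if_sum_diff_eq_0[OF this zero]
  have "cycle_cost d L = diag_cost d L"
    by (simp add: L_def diag_cost_upt cycle_cost_upt del: upt_Suc)
  moreover have "endpoints L = (W, Z)"
    using ends by (simp add: L_def endpoints_def hd_map last_map del: upt_Suc)
  ultimately show ?thesis
    using that[of L] sub diag_cost_finite[OF subset_trans[OF sub fin]] by (simp add: L_def del: upt_Suc)
qed

lemma Gamma'_finite:
  assumes ed: "ext_distance d" and fin: "\<Gamma> \<subseteq> {(x, y). d x y < \<infinity>}"
  shows "Gamma' d \<Gamma> \<subseteq> {(x, y). d x y < \<infinity>}"
proof clarify
  fix W Z assume "(W, Z) \<in> Gamma' d \<Gamma>"
  then obtain L where L: "endpoints L = (W, Z)" "cycle_cost d L = diag_cost d L" "diag_cost d L < \<infinity>"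
    by (rule Gamma'_chain[OF ed fin])
  have "d W Z \<le> cycle_cost d L"
    using L(1) chain_cost_nonneg[OF ed] by (auto simp: cycle_cost_def endpoints_def add_increasing)
  with L show "d W Z < \<infinity>" by (metis order_le_less_trans)
qed

text \<open>\<open>\<Gamma>'\<close> inherits cyclical monotonicity from \<open>\<Gamma>\<close>: replacing each pair of \<open>\<Gamma>'\<close> by its
  chain in \<open>\<Gamma>\<close> and concatenating, the inequality for \<open>\<Gamma>\<close> differs from the one for \<open>\<Gamma>'\<close>
  by the finite sum of the chain costs, which cancels.\<close>
lemma Gamma'_cyclically_monotone:
  assumes ed: "ext_distance d" and fin: "\<Gamma> \<subseteq> {(x, y). d x y < \<infinity>}"
    and cm: "cyclically_monotone d \<Gamma>"
  shows "cyclically_monotone d (Gamma' d \<Gamma>)"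
  unfolding cyclically_monotone_iff_lists
proof (intro allI impI)
  fix Ps assume Ps: "Ps \<noteq> []" "set Ps \<subseteq> Gamma' d \<Gamma>"
  have "\<forall>p\<in>set Ps. \<exists>L. L \<noteq> [] \<and> set L \<subseteq> \<Gamma> \<and> endpoints L = p \<and> cycle_cost d L = diag_cost d L"
    using Ps(2) by (metis (no_types, lifting) Gamma'_chain[OF ed fin] subsetD surj_pair)
  then obtain C where C: "\<And>p. p \<in> set Ps \<Longrightarrow>
      C p \<noteq> [] \<and> set (C p) \<subseteq> \<Gamma> \<and> endpoints (C p) = p \<and> cycle_cost d (C p) = diag_cost d (C p)"
    by metis
  define Ls where "Ls = map C Ps"
  define S where "S = sum_list (map (chain_cost d) Ls)"
  have ne: "Ls \<noteq> []" "\<forall>L\<in>set Ls. L \<noteq> []" using Ps(1) C by (auto simp: Ls_def)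
  have ends: "map endpoints Ls = Ps" using C by (simp add: Ls_def map_idI)
  have diag: "diag_cost d (concat Ls) = S + diag_cost d Ps"
    using diag_cost_concat_tight[of Ls d] C ends by (simp add: S_def Ls_def)
  have cyc: "cycle_cost d (concat Ls) = S + cycle_cost d Ps"
    using cycle_cost_concat[OF ne] ends by (simp add: S_def)
  have sub: "set (concat Ls) \<subseteq> \<Gamma>" using C by (auto simp: Ls_def)
  have "diag_cost d (concat Ls) \<le> cycle_cost d (concat Ls)"
    using cm ne sub by (auto simp: cyclically_monotone_iff_lists concat_eq_Nil_conv)
  then have le: "S + diag_cost d Ps \<le> S + cycle_cost d Ps" by (simp only: diag cyc)
  have "0 \<le> S" unfolding S_def by (intro sum_list_nonneg) (auto intro: chain_cost_nonneg[OF ed])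
  moreover have "S < \<infinity>"
  proof -
    have "0 \<le> diag_cost d Ps" by (simp add: diag_cost_conv_sum sum_nonneg ext_distance_nonneg[OF ed])
    then have "S \<le> diag_cost d (concat Ls)" by (simp add: diag add_increasing2)
    also have "\<dots> < \<infinity>" by (rule diag_cost_finite[OF subset_trans[OF sub fin]])
    finally show ?thesis .
  qed
  ultimately show "diag_cost d Ps \<le> cycle_cost d Ps" by (rule ereal_add_le_cancel_left[OF le])
qed

definition rays :: "('a \<Rightarrow> 'a \<Rightarrow> ereal) \<Rightarrow> ('a \<times> 'a) set \<Rightarrow> ('a \<times> 'a) set" where
  "rays d \<Delta> = {(x, y). \<exists>(w, z) \<in> \<Delta>. d w x + d x y + d y z = d w z}"

lemma transport_G_eq_rays: "transport_G d \<Gamma> = rays d (Gamma' d \<Gamma>)"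
  by (simp add: transport_G_def rays_def)

lemma subset_rays: "ext_distance d \<Longrightarrow> \<Delta> \<subseteq> rays d \<Delta>"
  by (force simp: rays_def ext_distance_refl)

lemma broken_line_pieces_finite:
  assumes ed: "ext_distance d" and fin: "d w x + d x y + d y z < \<infinity>"
  shows "d w x < \<infinity>" "d x y < \<infinity>" "d y z < \<infinity>"
proof -
  have nn: "0 \<le> d a b" for a b by (rule ext_distance_nonneg[OF ed])
  have "d w x \<le> d w x + d x y + d y z" "d x y \<le> d w x + d x y + d y z" "d y z \<le> d w x + d x y + d y z"
    using nn by (simp_all add: add_increasing add_increasing2)
  with fin show "d w x < \<infinity>" "d x y < \<infinity>" "d y z < \<infinity>" by (meson order_le_less_trans)+
qed

lemma rays_finite:
  assumes ed: "ext_distance d" and fin: "\<Delta> \<subseteq> {(x, y). d x y < \<infinity>}"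
  shows "rays d \<Delta> \<subseteq> {(x, y). d x y < \<infinity>}"
proof clarify
  fix x y assume "(x, y) \<in> rays d \<Delta>"
  then obtain w z where wz: "(w, z) \<in> \<Delta>" "d w x + d x y + d y z = d w z" by (auto simp: rays_def)
  from wz fin have "d w x + d x y + d y z < \<infinity>" by auto
  then show "d x y < \<infinity>" by (rule broken_line_pieces_finite(2)[OF ed])
qed

text \<open>Rays through a cyclically monotone set of finite cost form a cyclically monotone set:
  sliding each \<open>(x\<^sub>i, y\<^sub>i)\<close> out to its ray endpoints \<open>(w\<^sub>i, z\<^sub>i)\<close>, the inequality for the
  \<open>(w\<^sub>i, z\<^sub>i)\<close> and the triangle inequality give the one for the \<open>(x\<^sub>i, y\<^sub>i)\<close> after
  cancelling the finite costs \<open>\<Sum> d w\<^sub>i x\<^sub>i\<close> and \<open>\<Sum> d y\<^sub>i z\<^sub>i\<close>.\<close>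
lemma rays_cyclically_monotone:
  assumes ed: "ext_distance d" and fin: "\<Delta> \<subseteq> {(x, y). d x y < \<infinity>}"
    and cm: "cyclically_monotone d \<Delta>"
  shows "cyclically_monotone d (rays d \<Delta>)"
  unfolding cyclically_monotone_def
proof (intro allI impI)
  fix n and x y :: "nat \<Rightarrow> 'a"
  assume "\<forall>i\<le>n. (x i, y i) \<in> rays d \<Delta>"
  then have "\<forall>i. \<exists>w z. i \<le> n \<longrightarrow> (w, z) \<in> \<Delta> \<and> d w (x i) + d (x i) (y i) + d (y i) z = d w z"
    by (force simp: rays_def)
  then obtain W Z where WZ: "\<And>i. i \<le> n \<Longrightarrow> (W i, Z i) \<in> \<Delta>"
      and geo: "\<And>i. i \<le> n \<Longrightarrow> d (W i) (x i) + d (x i) (y i) + d (y i) (Z i) = d (W i) (Z i)"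
    by metis
  define s where "s i = (if i = n then 0 else Suc i)" for i
  have nn: "0 \<le> d a b" for a b by (rule ext_distance_nonneg[OF ed])
  have pieces: "d (W i) (x i) < \<infinity>" "d (y i) (Z i) < \<infinity>" if "i \<le> n" for i
  proof -
    have "d (W i) (x i) + d (x i) (y i) + d (y i) (Z i) < \<infinity>" using geo[OF that] WZ[OF that] fin by auto
    then show "d (W i) (x i) < \<infinity>" "d (y i) (Z i) < \<infinity>" by (rule broken_line_pieces_finite[OF ed])+
  qed
  define A where "A = (\<Sum>i\<le>n. d (W i) (x i))"
  define B where "B = (\<Sum>i\<le>n. d (x i) (y i))"
  define B' where "B' = (\<Sum>i\<le>n. d (x (s i)) (y i))"
  define C where "C = (\<Sum>i\<le>n. d (y i) (Z i))"
  have "A + B + C = (\<Sum>i\<le>n. d (W i) (Z i))"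
    unfolding A_def B_def C_def by (simp add: geo flip: sum.distrib)
  also have "\<dots> \<le> (\<Sum>i\<le>n. d (W (s i)) (Z i))"
    using cm[unfolded cyclically_monotone_def, rule_format, of n W Z] WZ unfolding s_def by blast
  also have "\<dots> \<le> (\<Sum>i\<le>n. d (W (s i)) (x (s i)) + d (x (s i)) (y i) + d (y i) (Z i))"
    by (intro sum_mono ext_distance_triangle3[OF ed])
  also have "\<dots> = A + B' + C"
  proof -
    have "(\<Sum>i\<le>n. d (W (s i)) (x (s i))) = A"
      unfolding A_def s_def by (rule sum_cyclic_shift)
    then show ?thesis by (simp add: B'_def C_def sum.distrib)
  qed
  finally have "A + (C + B) \<le> A + (C + B')" by (simp add: add_ac)
  moreover have "0 \<le> A" "0 \<le> C" by (simp_all add: A_def C_def sum_nonneg nn)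
  moreover have "A < \<infinity>" unfolding A_def using pieces(1) by (intro sum_ereal_finite) auto
  moreover have "C < \<infinity>" unfolding C_def using pieces(2) by (intro sum_ereal_finite) auto
  ultimately have "B \<le> B'" by (metis ereal_add_le_cancel_left)
  then show "(\<Sum>i\<le>n. d (x i) (y i)) \<le> (\<Sum>i\<le>n. d (x (if i = n then 0 else Suc i)) (y i))"
    unfolding B_def B'_def s_def .
qed

text \<open>Binary expansions. \<open>binary_digit j t\<close> is the \<open>(j+1)\<close>-st binary digit of \<open>t\<close>,
  \<open>binary_value c\<close> the real number with digit sequence \<open>c\<close>, and \<open>binary_prefix c j\<close>
  the integer whose binary digits are \<open>c 0, \<dots>, c j\<close>.\<close>
definition binary_digit :: "nat \<Rightarrow> real \<Rightarrow> bool" where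
  "binary_digit j t = odd \<lfloor>2 ^ Suc j * t\<rfloor>"

definition binary_value :: "(nat \<Rightarrow> bool) \<Rightarrow> real" where
  "binary_value c = (\<Sum>i. (if c i then 1 else 0) / 2 ^ Suc i)"

definition binary_prefix :: "(nat \<Rightarrow> bool) \<Rightarrow> nat \<Rightarrow> int" where
  "binary_prefix c j = (\<Sum>i<Suc j. (if c i then 1 else 0) * 2 ^ (j - i))"

lemma measurable_binary_digit[measurable]: "Measurable.pred borel (binary_digit j)"
  unfolding binary_digit_def by measurable

lemma binary_prefix_Suc:
  "binary_prefix c (Suc j) = 2 * binary_prefix c j + (if c (Suc j) then 1 else 0)"
proof -
  have "(\<Sum>i<Suc j. (if c i then 1 else 0) * 2 ^ (Suc j - i))
      = (\<Sum>i<Suc j. 2 * ((if c i then 1 else 0) * (2::int) ^ (j - i)))"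
    by (intro sum.cong refl) (auto simp: Suc_diff_le)
  then show ?thesis
    unfolding binary_prefix_def by (simp add: sum.lessThan_Suc[of _ "Suc j"] sum_distrib_left)
qed

lemma odd_binary_prefix: "odd (binary_prefix c j) \<longleftrightarrow> c j"
proof (cases j)
  case (Suc k)
  then show ?thesis by (simp only: binary_prefix_Suc) simp
qed (simp add: binary_prefix_def)

lemma summable_binary: "summable (\<lambda>i. (if c i then 1 else 0) / 2 ^ Suc i :: real)"
  by (rule summable_comparison_test'[OF summable_geometric[of "1/2::real", THEN summable_mult, of "1/2"], of 0])
    (auto simp: power_one_over)

lemma binary_value_nonneg: "0 \<le> binary_value c"
  unfolding binary_value_def by (intro suminf_nonneg summable_binary) auto

text \<open>A digit sequence with a zero digit has value strictly below \<open>1 = \<Sum> 2\<^sup>-\<^sup>(\<^sup>i\<^sup>+\<^sup>1\<^sup>)\<close>.\<close>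
lemma binary_value_less_1:
  assumes "\<not> c k"
  shows "binary_value c < 1"
proof -
  define g where "g i = ((1 - (if c i then 1 else 0)) / 2 ^ Suc i :: real)" for i
  have ones: "(\<lambda>i. 1 / 2 ^ Suc i :: real) sums 1"
    using power_half_series by (simp add: power_one_over)
  have "g sums (1 - binary_value c)"
    unfolding g_def diff_divide_distrib binary_value_def
    by (intro sums_diff ones summable_sums summable_binary)
  moreover have "0 < suminf g"
    using \<open>g sums _\<close> assms by (intro suminf_pos2[of _ k]) (auto simp: g_def sums_iff)
  ultimately show ?thesis by (simp add: sums_iff)
qed

lemma binary_value_shift:
  "2 ^ Suc j * binary_value c = of_int (binary_prefix c j) + binary_value (\<lambda>i. c (i + Suc j))"
proof -
  define f where "f i = ((if c i then 1 else 0) / 2 ^ Suc i :: real)" for i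
  have "summable f" unfolding f_def by (rule summable_binary)
  then have "binary_value c = (\<Sum>i. f (i + Suc j)) + (\<Sum>i<Suc j. f i)"
    unfolding binary_value_def f_def[symmetric] by (rule suminf_split_initial_segment)
  moreover have "2 ^ Suc j * (\<Sum>i. f (i + Suc j)) = binary_value (\<lambda>i. c (i + Suc j))"
    unfolding binary_value_def f_def
    by (subst suminf_mult[symmetric], rule summable_ignore_initial_segment[OF summable_binary])
      (simp add: power_add)
  moreover have "2 ^ Suc j * (\<Sum>i<Suc j. f i) = of_int (binary_prefix c j)"
    unfolding binary_prefix_def of_int_sum sum_distrib_left
  proof (intro sum.cong refl)
    fix i assume "i \<in> {..<Suc j}"
    then have "(2::real) ^ Suc j = 2 ^ (j - i) * 2 ^ Suc i" by (simp flip: power_add)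
    then show "2 ^ Suc j * f i = of_int ((if c i then 1 else 0) * 2 ^ (j - i))" by (simp add: f_def)
  qed
  ultimately show ?thesis by (simp add: distrib_left)
qed

lemma binary_digit_binary_value:
  assumes "\<And>j. \<exists>i>j. \<not> c i"
  shows "binary_digit j (binary_value c) = c j"
proof -
  obtain i where "i > j" "\<not> c i" using assms by blast
  then have "binary_value (\<lambda>i. c (i + Suc j)) < 1"
    by (intro binary_value_less_1[of _ "i - Suc j"]) simp
  moreover have "0 \<le> binary_value (\<lambda>i. c (i + Suc j))" by (rule binary_value_nonneg)
  ultimately have "\<lfloor>2 ^ Suc j * binary_value c\<rfloor> = binary_prefix c j"
    unfolding binary_value_shift by (simp add: floor_eq_iff)
  then show ?thesis by (simp add: binary_digit_def odd_binary_prefix)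
qed

text \<open>Decoding a sequence of natural numbers from a real: the \<open>n\<close>-th term is the position of the
  first zero among the digits with indices \<open>prod_encode (n, 0), prod_encode (n, 1), \<dots>\<close>.\<close>
definition nat_code :: "nat \<Rightarrow> real \<Rightarrow> nat" where
  "nat_code n t = (LEAST m. \<not> binary_digit (prod_encode (n, m)) t)"

lemma measurable_nat_code[measurable]: "nat_code n \<in> borel \<rightarrow>\<^sub>M count_space UNIV"
  unfolding nat_code_def by measurable

lemma nat_code_surj: "\<exists>t. \<forall>n. nat_code n t = k n"
proof -
  define c where "c j = (case prod_decode j of (n, m) \<Rightarrow> m < k n)" for j
  have c_encode: "c (prod_encode (n, m)) = (m < k n)" for n m by (simp add: c_def)
  have "\<exists>i>j. \<not> c i" for j
  proof (intro exI conjI)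
    show "j < prod_encode (Suc j, k (Suc j))" using le_prod_encode_1[of "Suc j" "k (Suc j)"] by simp
    show "\<not> c (prod_encode (Suc j, k (Suc j)))" by (simp add: c_encode)
  qed
  then have "binary_digit j (binary_value c) = c j" for j by (rule binary_digit_binary_value)
  then have "nat_code n (binary_value c) = k n" for n
    unfolding nat_code_def by (simp add: c_encode) (intro Least_equality; simp)
  then show ?thesis by blast
qed

lemma Cauchy_if_dist_Suc_less_half_power:
  fixes s :: "nat \<Rightarrow> 'b::metric_space"
  assumes "\<And>n. dist (s n) (s (Suc n)) < (1/2) ^ n"
  shows "Cauchy s"
proof -
  have tail: "dist (s m) (s (m + k)) \<le> 2 * (1/2) ^ m - 2 * (1/2) ^ (m + k)" for m k
  proof (induction k)
    case (Suc k)
    have "dist (s m) (s (m + Suc k)) \<le> dist (s m) (s (m + k)) + dist (s (m + k)) (s (Suc (m + k)))"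
      by (simp add: dist_triangle)
    also have "\<dots> \<le> 2 * (1/2) ^ m - 2 * (1/2) ^ (m + k) + (1/2) ^ (m + k)"
      using Suc assms[of "m + k"] by linarith
    finally show ?case by simp
  qed simp
  show ?thesis
  proof (rule metric_CauchyI)
    fix e :: real assume "0 < e"
    then obtain M where M: "(1/2::real) ^ M < e / 4"
      using real_arch_pow_inv[of "e/4" "1/2"] by auto
    have close: "dist (s M) (s p) < e / 2" if "p \<ge> M" for p
    proof -
      have "dist (s M) (s p) \<le> 2 * (1/2) ^ M - 2 * (1/2) ^ p" using tail[of M "p - M"] that by simp
      moreover have "(0::real) < (1/2) ^ p" by simp
      ultimately show ?thesis using M by linarith
    qed
    have "dist (s m) (s n) < e" if "m \<ge> M" "n \<ge> M" for m n
      using dist_triangle3[of "s m" "s n" "s M"] close[OF \<open>m \<ge> M\<close>] close[OF \<open>n \<ge> M\<close>] by linarith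
    then show "\<exists>M. \<forall>m\<ge>M. \<forall>n\<ge>M. dist (s m) (s n) < e" by blast
  qed
qed

lemma fast_approximation:
  fixes e :: "nat \<Rightarrow> 'b::metric_space"
  assumes dense: "\<And>r. r > 0 \<Longrightarrow> \<exists>m. dist (e m) y < r"
  obtains k where "\<And>n. dist (e (k n)) (e (k (Suc n))) < (1/2) ^ n" "(\<lambda>n. e (k n)) \<longlonglongrightarrow> y"
proof -
  have "\<exists>m. dist (e m) y < (1/2) ^ (n + 2)" for n by (rule dense) simp
  then obtain k where k: "\<And>n. dist (e (k n)) y < (1/2) ^ (n + 2)" by metis
  have "dist (e (k n)) (e (k (Suc n))) < (1/2) ^ n" for n
  proof -
    have "dist (e (k n)) (e (k (Suc n))) \<le> dist (e (k n)) y + dist (e (k (Suc n))) y"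
      by (rule dist_triangle2)
    also have "\<dots> < (1/2) ^ (n + 2) + (1/2) ^ (Suc n + 2)" using k[of n] k[of "Suc n"] by linarith
    also have "\<dots> \<le> (1/2) ^ n" by (simp add: power_add)
    finally show ?thesis .
  qed
  moreover have "(\<lambda>n. e (k n)) \<longlonglongrightarrow> y"
  proof (rule tendstoI)
    fix r :: real assume "0 < r"
    then obtain M where M: "(1/2::real) ^ M < r" using real_arch_pow_inv[of r "1/2"] by auto
    have "dist (e (k n)) y < r" if "n \<ge> M" for n
      using k[of n] M power_decreasing[of M "n + 2" "1/2::real"] that by simp
    then show "\<forall>\<^sub>F n in sequentially. dist (e (k n)) y < r" by (auto simp: eventually_sequentially)
  qed
  ultimately show ?thesis by (rule that)
qed

text \<open>Every Polish space is the image of the reals under a Borel map: decode a sequence of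
  indices into a countable dense set from a real, and map it to its limit when it is fast Cauchy.\<close>
lemma borel_surjection_from_reals:
  "\<exists>\<psi> :: real \<Rightarrow> 'b::polish_space. \<psi> \<in> borel_measurable borel \<and> surj \<psi>"
proof -
  obtain D :: "'b set" where D: "countable D" "\<And>X. open X \<Longrightarrow> X \<noteq> {} \<Longrightarrow> \<exists>d\<in>D. d \<in> X"
    using countable_dense_exists by blast
  have "D \<noteq> {}" using D(2)[of UNIV] by auto
  define e where "e = from_nat_into D"
  have dense: "\<exists>m. dist (e m) y < r" if "r > 0" for y r
  proof -
    have "\<exists>x\<in>D. x \<in> ball y r" using D(2)[of "ball y r"] that by auto
    then obtain x where "x \<in> D" "x \<in> ball y r" by blast
    moreover have "x \<in> range e"
      using \<open>x \<in> D\<close> range_from_nat_into[OF \<open>D \<noteq> {}\<close> D(1)] by (simp add: e_def)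
    ultimately show ?thesis by (auto simp: dist_commute)
  qed
  define fast where "fast t \<longleftrightarrow> (\<forall>n. dist (e (nat_code n t)) (e (nat_code (Suc n) t)) < (1/2::real) ^ n)" for t
  define g where "g i t = (if fast t then e (nat_code i t) else e 0)" for i t
  define \<psi> where "\<psi> t = (if fast t then lim (\<lambda>n. e (nat_code n t)) else e 0)" for t
  have [measurable]: "e \<in> count_space UNIV \<rightarrow>\<^sub>M borel" by simp
  have [measurable]: "Measurable.pred borel fast" unfolding fast_def by measurable
  have "g i \<in> borel_measurable borel" for i unfolding g_def by measurable
  moreover have "(\<lambda>i. g i t) \<longlonglongrightarrow> \<psi> t" for t
  proof (cases "fast t")
    case True
    then have "convergent (\<lambda>n. e (nat_code n t))"
      unfolding fast_def by (intro Cauchy_convergent Cauchy_if_dist_Suc_less_half_power) auto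
    with True show ?thesis by (simp add: g_def \<psi>_def convergent_LIMSEQ_iff)
  qed (simp add: g_def \<psi>_def)
  ultimately have "\<psi> \<in> borel_measurable borel" by (rule borel_measurable_LIMSEQ_metric)
  moreover have "y \<in> range \<psi>" for y
  proof -
    obtain k where k: "\<And>n. dist (e (k n)) (e (k (Suc n))) < (1/2) ^ n" "(\<lambda>n. e (k n)) \<longlonglongrightarrow> y"
      using fast_approximation[of e y] dense by blast
    obtain t where t: "\<And>n. nat_code n t = k n" using nat_code_surj[of k] by blast
    have "fast t" unfolding fast_def t using k(1) by blast
    then have "\<psi> t = y" using k(2) by (simp add: \<psi>_def t limI)
    then show ?thesis by (metis rangeI)
  qed
  ultimately show ?thesis by blast
qed

text \<open>Projections of Borel sets in a product with any Polish space are analytic (the auxiliary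
  Polish space in the definition of analytic sets can be replaced by the reals).\<close>
lemma analytic_set_projection:
  fixes C :: "('z::second_countable_topology \<times> 'b::polish_space) set"
  assumes C: "C \<in> sets borel"
  shows "analytic_set (fst ` C)"
proof -
  obtain \<psi> :: "real \<Rightarrow> 'b" where \<psi>: "\<psi> \<in> borel_measurable borel" "surj \<psi>"
    using borel_surjection_from_reals by blast
  define h where "h = (\<lambda>x::'z \<times> real. (fst x, \<psi> (snd x)))"
  have "h \<in> borel \<rightarrow>\<^sub>M borel \<Otimes>\<^sub>M borel" unfolding h_def using \<psi>(1) by (simp flip: borel_prod)
  then have "h \<in> borel \<rightarrow>\<^sub>M borel" by (simp add: borel_prod)
  from measurable_sets[OF this C] have "h -` C \<in> sets borel" by simp
  moreover have "fst ` (h -` C) = fst ` C"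
  proof
    show "fst ` C \<subseteq> fst ` (h -` C)"
    proof
      fix z assume "z \<in> fst ` C"
      then obtain b where "(z, b) \<in> C" by force
      moreover obtain t where "b = \<psi> t" using \<psi>(2) by (metis UNIV_I imageE)
      ultimately have "(z, t) \<in> h -` C" by (simp add: h_def)
      then show "z \<in> fst ` (h -` C)" by force
    qed
  qed (force simp: h_def)
  ultimately show ?thesis unfolding analytic_set_def by blast
qed

lemma analytic_set_Un:
  "analytic_set A \<Longrightarrow> analytic_set B \<Longrightarrow> analytic_set (A \<union> B)"
  unfolding analytic_set_def by (metis image_Un sets.Un)

text \<open>The converse of an analytic relation is analytic: swap the coordinates before projecting.\<close>
lemma analytic_set_converse:
  fixes A :: "('a::second_countable_topology \<times> 'a) set"
  assumes "analytic_set A"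
  shows "analytic_set (A\<inverse>)"
proof -
  obtain B where B: "B \<in> sets (borel :: (('a \<times> 'a) \<times> real) measure)" "A = fst ` B"
    using assms unfolding analytic_set_def by blast
  define h where "h = (\<lambda>\<omega>::('a \<times> 'a) \<times> real. ((snd (fst \<omega>), fst (fst \<omega>)), snd \<omega>))"
  have "h \<in> borel \<rightarrow>\<^sub>M borel" unfolding h_def by (intro borel_measurable_continuous_onI continuous_intros)
  from measurable_sets[OF this B(1)] have "h -` B \<in> sets borel" by simp
  moreover have "fst ` (h -` B) = A\<inverse>"
  proof
    show "A\<inverse> \<subseteq> fst ` (h -` B)"
    proof
      fix ab assume "ab \<in> A\<inverse>"
      then obtain a b t where "ab = (a, b)" "((b, a), t) \<in> B" using B(2) by force
      then have "((a, b), t) \<in> h -` B" "ab = fst ((a, b), t)" by (simp_all add: h_def)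
      then show "ab \<in> fst ` (h -` B)" by blast
    qed
  qed (force simp: h_def B(2))
  ultimately show ?thesis unfolding analytic_set_def by blast
qed

text \<open>The square of a Polish space is Polish; needed for sequences of pairs as witnesses.\<close>
instance prod :: (polish_space, polish_space) polish_space ..

lemma sigma_compact_borel:
  fixes S :: "'a::t2_space set"
  assumes "sigma_compact S"
  shows "S \<in> sets borel"
proof -
  obtain K :: "nat \<Rightarrow> _" where K: "\<And>n. compact (K n)" "S = (\<Union>n. K n)"
    using assms unfolding sigma_compact_def by blast
  have "K n \<in> sets borel" for n by (rule borel_closed[OF compact_imp_closed[OF K(1)]])
  then show ?thesis unfolding K(2) by (intro sets.countable_UN) auto
qed

lemma measurable_distance_comp:
  fixes d :: "'a::second_countable_topology \<Rightarrow> 'a \<Rightarrow> ereal"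
  assumes dm: "(\<lambda>p. d (fst p) (snd p)) \<in> borel_measurable borel"
    and f: "f \<in> M \<rightarrow>\<^sub>M borel" and g: "g \<in> M \<rightarrow>\<^sub>M borel"
  shows "(\<lambda>\<omega>. d (f \<omega>) (g \<omega>)) \<in> borel_measurable M"
proof -
  have "(\<lambda>\<omega>. (f \<omega>, g \<omega>)) \<in> M \<rightarrow>\<^sub>M borel" using f g by (simp flip: borel_prod)
  from measurable_compose[OF this dm] show ?thesis by simp
qed

lemma ray_condition_measurable:
  fixes d :: "'a::second_countable_topology \<Rightarrow> 'a \<Rightarrow> ereal"
  assumes dm: "(\<lambda>p. d (fst p) (snd p)) \<in> borel_measurable borel"
    and [measurable]: "\<And>i. w i \<in> M \<rightarrow>\<^sub>M borel" "\<And>i. z i \<in> M \<rightarrow>\<^sub>M borel"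
      "x \<in> M \<rightarrow>\<^sub>M borel" "y \<in> M \<rightarrow>\<^sub>M borel"
      "\<And>i. Measurable.pred M (\<lambda>\<omega>. (w i \<omega>, z i \<omega>) \<in> \<Gamma>)"
  shows "Measurable.pred M (\<lambda>\<omega>. (\<forall>i\<le>I. (w i \<omega>, z i \<omega>) \<in> \<Gamma>) \<and>
     (\<Sum>i\<le>I. d (w (if i = I then 0 else Suc i) \<omega>) (z i \<omega>) - d (w i \<omega>) (z i \<omega>)) = 0 \<and>
     d (w 0 \<omega>) (x \<omega>) + d (x \<omega>) (y \<omega>) + d (y \<omega>) (z I \<omega>) = d (w 0 \<omega>) (z I \<omega>))"
proof -
  note [measurable (raw)] = measurable_distance_comp[OF dm]
  show ?thesis by measurable
qed

definition ray_witnesses ::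
    "('a \<Rightarrow> 'a \<Rightarrow> ereal) \<Rightarrow> ('a \<times> 'a) set \<Rightarrow> nat \<Rightarrow> (('a \<times> 'a) \<times> (nat \<Rightarrow> 'a \<times> 'a)) set" where
  "ray_witnesses d \<Gamma> I = {((x, y), p).
     (\<forall>i\<le>I. p i \<in> \<Gamma>) \<and>
     (\<Sum>i\<le>I. d (fst (p (if i = I then 0 else Suc i))) (snd (p i)) - d (fst (p i)) (snd (p i))) = 0 \<and>
     d (fst (p 0)) x + d x y + d y (snd (p I)) = d (fst (p 0)) (snd (p I))}"

lemma Gamma'I:
  assumes "\<forall>i\<le>I. (w i, z i) \<in> \<Gamma>"
    and "(\<Sum>i\<le>I. d (w (if i = I then 0 else Suc i)) (z i) - d (w i) (z i)) = 0"
  shows "(w 0, z I) \<in> Gamma' d \<Gamma>"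
  using assms unfolding Gamma'_def by blast

lemma transport_G_eq_projection: "transport_G d \<Gamma> = fst ` (\<Union>I. ray_witnesses d \<Gamma> I)"
proof
  show "transport_G d \<Gamma> \<subseteq> fst ` (\<Union>I. ray_witnesses d \<Gamma> I)"
  proof clarify
    fix x y assume "(x, y) \<in> transport_G d \<Gamma>"
    then obtain I w z where "\<forall>i\<le>I. (w i, z i) \<in> \<Gamma>"
      "(\<Sum>i\<le>I. d (w (if i = I then 0 else Suc i)) (z i) - d (w i) (z i)) = 0"
      "d (w 0) x + d x y + d y (z I) = d (w 0) (z I)"
      unfolding transport_G_def Gamma'_def by blast
    then have "((x, y), \<lambda>i. (w i, z i)) \<in> ray_witnesses d \<Gamma> I" by (simp add: ray_witnesses_def)
    then show "(x, y) \<in> fst ` (\<Union>I. ray_witnesses d \<Gamma> I)" by force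
  qed
  show "fst ` (\<Union>I. ray_witnesses d \<Gamma> I) \<subseteq> transport_G d \<Gamma>"
  proof
    fix xy assume "xy \<in> fst ` (\<Union>I. ray_witnesses d \<Gamma> I)"
    then obtain I x y p where xy: "xy = (x, y)" and "((x, y), p) \<in> ray_witnesses d \<Gamma> I" by force
    then have wit: "\<forall>i\<le>I. p i \<in> \<Gamma>"
      "(\<Sum>i\<le>I. d (fst (p (if i = I then 0 else Suc i))) (snd (p i)) - d (fst (p i)) (snd (p i))) = 0"
      "d (fst (p 0)) x + d x y + d y (snd (p I)) = d (fst (p 0)) (snd (p I))"
      by (simp_all add: ray_witnesses_def)
    have "(fst (p 0), snd (p I)) \<in> Gamma' d \<Gamma>"
      using Gamma'I[of I "\<lambda>i. fst (p i)" "\<lambda>i. snd (p i)"] wit(1,2) by simp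
    with wit(3) show "xy \<in> transport_G d \<Gamma>" unfolding xy transport_G_def by blast
  qed
qed

lemma ray_witnesses_borel:
  fixes d :: "'a::polish_space \<Rightarrow> 'a \<Rightarrow> ereal"
  assumes dm: "(\<lambda>p. d (fst p) (snd p)) \<in> borel_measurable borel" and \<Gamma>: "\<Gamma> \<in> sets borel"
  shows "ray_witnesses d \<Gamma> I \<in> sets borel"
proof -
  have p: "continuous_on UNIV (\<lambda>\<omega>::('a \<times> 'a) \<times> (nat \<Rightarrow> 'a \<times> 'a). snd \<omega> i)" for i
    using continuous_on_compose2[OF continuous_on_product_coordinates[of i] continuous_on_snd[OF continuous_on_id]]
    by simp
  have "(\<lambda>\<omega>::('a \<times> 'a) \<times> (nat \<Rightarrow> 'a \<times> 'a). snd \<omega> i) \<in> borel \<rightarrow>\<^sub>M borel" for i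
    using p by (rule borel_measurable_continuous_onI)
  from pred_sets2[OF \<Gamma> this]
  have \<Gamma>_pred: "Measurable.pred borel (\<lambda>\<omega>::('a \<times> 'a) \<times> (nat \<Rightarrow> 'a \<times> 'a). (fst (snd \<omega> i), snd (snd \<omega> i)) \<in> \<Gamma>)"
    for i by simp
  have w: "(\<lambda>\<omega>::('a \<times> 'a) \<times> (nat \<Rightarrow> 'a \<times> 'a). fst (snd \<omega> i)) \<in> borel \<rightarrow>\<^sub>M borel"
    and z: "(\<lambda>\<omega>::('a \<times> 'a) \<times> (nat \<Rightarrow> 'a \<times> 'a). snd (snd \<omega> i)) \<in> borel \<rightarrow>\<^sub>M borel" for i
    by (intro borel_measurable_continuous_onI continuous_on_fst continuous_on_snd p)+
  have x: "(\<lambda>\<omega>::('a \<times> 'a) \<times> (nat \<Rightarrow> 'a \<times> 'a). fst (fst \<omega>)) \<in> borel \<rightarrow>\<^sub>M borel"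
    and y: "(\<lambda>\<omega>::('a \<times> 'a) \<times> (nat \<Rightarrow> 'a \<times> 'a). snd (fst \<omega>)) \<in> borel \<rightarrow>\<^sub>M borel"
    by (intro borel_measurable_continuous_onI continuous_intros)+
  have "Measurable.pred borel (\<lambda>\<omega>. \<omega> \<in> ray_witnesses d \<Gamma> I)"
    by (rule measurable_cong[THEN iffD1, OF _ ray_condition_measurable[OF dm w z x y \<Gamma>_pred]])
      (force simp: ray_witnesses_def)
  then show ?thesis by (simp add: pred_def)
qed

theorem lemma3p3:
  fixes dL :: "'a::polish_space \<Rightarrow> 'a \<Rightarrow> ereal"
    and \<Gamma> :: "('a \<times> 'a) set"
  assumes "ext_distance dL"
    and "(\<lambda>p. dL (fst p) (snd p)) \<in> borel_measurable borel"
    and "\<Gamma> \<subseteq> {(x, y). dL x y < \<infinity>}"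
    and "sigma_compact \<Gamma>"
    and "cyclically_monotone dL \<Gamma>"
  shows "cyclically_monotone dL (transport_G dL \<Gamma>) \<and>
         Gamma' dL \<Gamma> \<subseteq> transport_G dL \<Gamma> \<and>
         transport_G dL \<Gamma> \<subseteq> {(x, y). dL x y < \<infinity>} \<and>
         analytic_set (transport_G dL \<Gamma>) \<and>
         analytic_set (transport_R dL \<Gamma>)"
proof -
  note ed = assms(1) and dm = assms(2) and fin = assms(3) and cm = assms(5)
  have fin': "Gamma' dL \<Gamma> \<subseteq> {(x, y). dL x y < \<infinity>}" by (rule Gamma'_finite[OF ed fin])
  have cm': "cyclically_monotone dL (Gamma' dL \<Gamma>)" by (rule Gamma'_cyclically_monotone[OF ed fin cm])
  have "(\<Union>I. ray_witnesses dL \<Gamma> I) \<in> sets borel"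
    using ray_witnesses_borel[OF dm sigma_compact_borel[OF assms(4)]] by blast
  then have analytic: "analytic_set (transport_G dL \<Gamma>)"
    unfolding transport_G_eq_projection by (rule analytic_set_projection)
  show ?thesis
    unfolding transport_G_eq_rays transport_R_def
    using rays_cyclically_monotone[OF ed fin' cm'] subset_rays[OF ed] rays_finite[OF ed fin']
      analytic analytic_set_Un[OF analytic analytic_set_converse[OF analytic]]
    by (simp add: transport_G_eq_rays)
qed

end
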